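(* Let $d\ge1$, $N\ge2$, let $a:\mathbb{Z}^d\to\mathbb{R}$ define a symmetric, spatially homogeneous, irreducible random walk satisfying condition (F) or condition (HT), let $x_1,\dots,x_N\in\mathbb{Z}^d$ be distinct, and let $\mathscr{H}_\beta=\mathscr{A}+\beta\sum_{i=1}^N\delta_{x_i}\delta_{x_i}^T$ with $\beta>\beta_c$. Let $\lambda_0(\beta)$ be the largest positive eigenvalue of $\mathscr{H}_\beta$. Then every other positive eigenvalue of $\mathscr{H}_\beta$ (i.e. each of $\lambda_1(\beta),\dots,\lambda_{N-1}(\beta)$) has multiplicity at most $N-1$.
   Context: $a$ satisfies $a(0)<0$, $a(z)\ge0$ for $z\ne0$, $a(z)=a(-z)$, $\sum_z a(z)=0$, and irreducibility (every $z\in\mathbb{Z}^d$ is a finite sum of vectors $z_i$ with $a(z_i)\ne0$). $(\mathscr{A}u)(x)=\sum_{x'}a(x-x')u(x')$ on $l^2(\mathbb{Z}^d)$; $\delta_x$ is the indicator vector of $x$. Condition (F): $\sum_z|z|^2a(z)<\infty$. Condition (HT): $a(z)\sim H(z/|z|)|z|^{-(d+\alpha)}$ as $|z|\to\infty$ for some $\alpha\in(0,2)$ and some continuous positive symmetric function $H$ on $\mathbb{S}^{d-1}$. $\beta_c$ is the minimal value of $\beta$ such that the spectrum of $\mathscr{H}_\beta$ contains positive eigenvalues for all $\beta>\beta_c$ sufficiently close to $\beta_c$. The positive eigenvalues of $\mathscr{H}_\beta$ listed with multiplicity are denoted $\lambda_0(\beta)>\lambda_1(\beta)\ge\dots\ge\lambda_{N-1}(\beta)>0$.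 *)

theory Defs
  imports "HOL-Analysis.Analysis"
begin

text \<open>Lattice points of Z^d are modelled as int ^ 'd (d = CARD('d) >= 1);
  real embedding used for Euclidean norms.\<close>

definition realv :: "int ^ 'd \<Rightarrow> real ^ 'd" where
  "realv z = (\<chi> i. real_of_int (z $ i))"

definition is_rw_kernel :: "(int ^ 'd \<Rightarrow> real) \<Rightarrow> bool" where
  "is_rw_kernel a \<longleftrightarrow>
     a 0 < 0 \<and> (\<forall>z. z \<noteq> 0 \<longrightarrow> a z \<ge> 0) \<and> (\<forall>z. a z = a (- z)) \<and>
     (a has_sum 0) UNIV \<and>
     (\<forall>z. \<exists>zs. (\<forall>w\<in>set zs. a w \<noteq> 0) \<and> z = sum_list zs)"

definition cond_F :: "(int ^ 'd \<Rightarrow> real) \<Rightarrow> bool" where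
  "cond_F a \<longleftrightarrow> (\<lambda>z. (norm (realv z))^2 * a z) summable_on UNIV"

definition cond_HT :: "(int ^ 'd \<Rightarrow> real) \<Rightarrow> bool" where
  "cond_HT a \<longleftrightarrow> (\<exists>(\<alpha>::real) (H :: real ^ 'd \<Rightarrow> real).
     0 < \<alpha> \<and> \<alpha> < 2 \<and> continuous_on (sphere 0 1) H \<and>
     (\<forall>w\<in>sphere 0 1. H w > 0 \<and> H (- w) = H w) \<and>
     (\<forall>\<epsilon>>0. \<exists>R. \<forall>z. norm (realv z) > R \<longrightarrow>
        \<bar>a z / (H (realv z /\<^sub>R norm (realv z)) *
                 norm (realv z) powr (- (real CARD('d) + \<alpha>))) - 1\<bar> < \<epsilon>))"

definition l2 :: "(int ^ 'd \<Rightarrow> real) \<Rightarrow> bool" where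
  "l2 u \<longleftrightarrow> (\<lambda>x. (u x)^2) summable_on UNIV"

definition opA :: "(int ^ 'd \<Rightarrow> real) \<Rightarrow> (int ^ 'd \<Rightarrow> real) \<Rightarrow> int ^ 'd \<Rightarrow> real" where
  "opA a u x = (\<Sum>\<^sub>\<infinity>x'. a (x - x') * u x')"

definition opH :: "(int ^ 'd \<Rightarrow> real) \<Rightarrow> real \<Rightarrow> nat \<Rightarrow> (nat \<Rightarrow> int ^ 'd)
                   \<Rightarrow> (int ^ 'd \<Rightarrow> real) \<Rightarrow> int ^ 'd \<Rightarrow> real" where
  "opH a \<beta> N xs u x = opA a u x + \<beta> * (\<Sum>i<N. (if x = xs i then u (xs i) else 0))"

definition eigenspace_H :: "(int ^ 'd \<Rightarrow> real) \<Rightarrow> real \<Rightarrow> nat \<Rightarrow> (nat \<Rightarrow> int ^ 'd)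
                   \<Rightarrow> real \<Rightarrow> (int ^ 'd \<Rightarrow> real) set" where
  "eigenspace_H a \<beta> N xs lam = {u. l2 u \<and> opH a \<beta> N xs u = (\<lambda>x. lam * u x)}"

definition is_eigenvalue_H :: "(int ^ 'd \<Rightarrow> real) \<Rightarrow> real \<Rightarrow> nat \<Rightarrow> (nat \<Rightarrow> int ^ 'd)
                   \<Rightarrow> real \<Rightarrow> bool" where
  "is_eigenvalue_H a \<beta> N xs lam \<longleftrightarrow> (\<exists>u\<in>eigenspace_H a \<beta> N xs lam. u \<noteq> (\<lambda>x. 0))"

definition beta_c :: "(int ^ 'd \<Rightarrow> real) \<Rightarrow> nat \<Rightarrow> (nat \<Rightarrow> int ^ 'd) \<Rightarrow> real" where
  "beta_c a N xs = Inf {b. \<exists>\<epsilon>>0. \<forall>\<beta>. b < \<beta> \<and> \<beta> < b + \<epsilon> \<longrightarrow>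
                         (\<exists>lam>0. is_eigenvalue_H a \<beta> N xs lam)}"

definition lin_indep :: "('a \<Rightarrow> real) set \<Rightarrow> bool" where
  "lin_indep S \<longleftrightarrow> (\<forall>c. (\<forall>x. (\<Sum>v\<in>S. c v * v x) = 0) \<longrightarrow> (\<forall>v\<in>S. c v = 0))"

definition mult_le :: "(int ^ 'd \<Rightarrow> real) \<Rightarrow> real \<Rightarrow> nat \<Rightarrow> (nat \<Rightarrow> int ^ 'd)
                   \<Rightarrow> real \<Rightarrow> nat \<Rightarrow> bool" where
  "mult_le a \<beta> N xs lam m \<longleftrightarrow>
     (\<forall>S. finite S \<and> S \<subseteq> eigenspace_H a \<beta> N xs lam \<and> lin_indep S \<longrightarrow> card S \<le> m)"

end

theory Submission
  imports Defs
begin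

text \<open>The rank-\<open>N\<close> perturbation only sees the values at the points \<open>x\<^sub>i\<close>, while \<open>\<A>\<close> is
  symmetric and negative semidefinite on \<open>\<ell>\<^sup>2\<close> because \<open>a\<close> is even, has mass \<open>0\<close> and is
  nonnegative off the origin. So eigenfunctions \<open>u, v\<close> of \<open>\<H>\<^sub>\<beta>\<close> for distinct positive
  eigenvalues \<open>\<lambda>, \<mu>\<close> are orthogonal, and if they agree at every \<open>x\<^sub>i\<close> then
  \<open>\<A>(u - v) = \<lambda>u - \<mu>v\<close>, whence \<open>0 \<ge> \<langle>\<A>(u - v), u - v\<rangle> = \<lambda>\<parallel>u\<parallel>\<^sup>2 + \<mu>\<parallel>v\<parallel>\<^sup>2\<close> and
  \<open>u = v = 0\<close>. Thus restriction to the points is injective on the \<open>\<lambda>\<close>-eigenspace, and its image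
  in \<open>\<real>\<^sup>N\<close> misses the restriction of any nonzero eigenfunction for a larger eigenvalue, so it
  is a proper subspace.\<close>

section \<open>Summable real families and \<open>\<ell>\<^sup>2\<close>\<close>

lemma abs_mult_le_half_squares: "\<bar>x * y\<bar> \<le> x\<^sup>2 / 2 + y\<^sup>2 / 2" for x y :: real
proof -
  have "0 \<le> (\<bar>x\<bar> - \<bar>y\<bar>)\<^sup>2" by simp
  then show ?thesis by (simp add: power2_diff abs_mult)
qed

lemma summable_on_dominated_real:
  fixes f g :: "'a \<Rightarrow> real"
  assumes "g summable_on A" and "\<And>x. x \<in> A \<Longrightarrow> \<bar>f x\<bar> \<le> g x"
  shows "f summable_on A"
proof -
  have "(\<lambda>x. norm (g x)) summable_on A"
    using assms(1) summable_on_iff_abs_summable_on_real by blast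
  then have "(\<lambda>x. norm (f x)) summable_on A"
    by (rule Infinite_Sum.abs_summable_on_comparison_test) (use assms(2) in force)
  then show ?thesis
    using summable_on_iff_abs_summable_on_real by blast
qed

lemma
  fixes f g :: "'a \<Rightarrow> real"
  assumes "f summable_on A" and "g summable_on A"
  shows summable_on_lincomb: "(\<lambda>x. p * f x + q * g x) summable_on A"
    and infsum_lincomb: "(\<Sum>\<^sub>\<infinity>x\<in>A. p * f x + q * g x) = p * infsum f A + q * infsum g A"
proof -
  have "(\<lambda>x. p * f x) summable_on A" and "(\<lambda>x. q * g x) summable_on A"
    using assms by (auto intro: summable_on_cmult_right)
  then show "(\<lambda>x. p * f x + q * g x) summable_on A"
    and "(\<Sum>\<^sub>\<infinity>x\<in>A. p * f x + q * g x) = p * infsum f A + q * infsum g A"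
    by (auto intro: summable_on_add simp: infsum_add infsum_cmult_right')
qed

definition l2_inner :: "('a \<Rightarrow> real) \<Rightarrow> ('a \<Rightarrow> real) \<Rightarrow> real" where
  "l2_inner u v = (\<Sum>\<^sub>\<infinity>x. u x * v x)"

lemma l2_inner_commute: "l2_inner u v = l2_inner v u"
  unfolding l2_inner_def by (simp add: mult.commute)

lemma l2_mult_summable:
  assumes "l2 u" and "l2 v"
  shows "(\<lambda>x. u x * v x) summable_on UNIV"
proof (rule summable_on_dominated_real)
  show "(\<lambda>x. (u x)\<^sup>2 / 2 + (v x)\<^sup>2 / 2) summable_on UNIV"
    using summable_on_lincomb[of "\<lambda>x. (u x)\<^sup>2" UNIV "\<lambda>x. (v x)\<^sup>2" "1/2" "1/2"] assms
    by (simp add: l2_def)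
qed (rule abs_mult_le_half_squares)

lemma infsum_square_eq_l2_inner: "(\<Sum>\<^sub>\<infinity>x. (u x)\<^sup>2) = l2_inner u u"
  unfolding l2_inner_def by (simp add: power2_eq_square)

lemma l2_translate: "l2 u \<Longrightarrow> l2 (\<lambda>x. u (x - z))"
  unfolding l2_def
  using summable_on_reindex_bij_betw[of "\<lambda>x. x - z" UNIV UNIV "\<lambda>x. (u x)\<^sup>2"]
  by (simp add: bij_betw_def inj_on_def surj_def)

lemma l2_lincomb:
  assumes "l2 u" and "l2 v"
  shows "l2 (\<lambda>x. p * u x + q * v x)"
  unfolding l2_def
proof (rule summable_on_dominated_real)
  show "(\<lambda>x. 2 * p\<^sup>2 * (u x)\<^sup>2 + 2 * q\<^sup>2 * (v x)\<^sup>2) summable_on UNIV"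
    using assms unfolding l2_def by (intro summable_on_lincomb)
  show "\<bar>(p * u x + q * v x)\<^sup>2\<bar> \<le> 2 * p\<^sup>2 * (u x)\<^sup>2 + 2 * q\<^sup>2 * (v x)\<^sup>2" for x
    using abs_mult_le_half_squares[of "p * u x" "q * v x"]
    by (simp add: power2_sum power_mult_distrib)
qed

lemma l2_abs_le:
  assumes "l2 u"
  shows "\<bar>u y\<bar> \<le> 1 + (\<Sum>\<^sub>\<infinity>x. (u x)\<^sup>2)"
proof -
  have "(u y)\<^sup>2 \<le> (\<Sum>\<^sub>\<infinity>x. (u x)\<^sup>2)"
    using finite_sum_le_infsum[of "\<lambda>x. (u x)\<^sup>2" UNIV "{y}"] assms by (simp add: l2_def)
  moreover have "0 \<le> (\<bar>u y\<bar> - 1)\<^sup>2" by simp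
  ultimately show ?thesis by (simp add: power2_diff)
qed

lemma l2_inner_lincomb_left:
  assumes "l2 u" and "l2 v" and "l2 w"
  shows "l2_inner (\<lambda>x. p * u x + q * v x) w = p * l2_inner u w + q * l2_inner v w"
  using infsum_lincomb[OF l2_mult_summable[OF assms(1,3)] l2_mult_summable[OF assms(2,3)]]
  unfolding l2_inner_def by (simp add: algebra_simps)

lemma l2_inner_self_nonneg: "0 \<le> l2_inner u u"
  unfolding l2_inner_def by (simp add: infsum_nonneg)

lemma l2_inner_self_le_0D:
  assumes "l2 u" and "l2_inner u u \<le> 0"
  shows "u = (\<lambda>x. 0)"
proof
  fix x
  have "u x * u x = 0"
    using nonneg_infsum_le_0D[of "\<lambda>x. u x * u x" UNIV] assms l2_mult_summable[OF assms(1,1)]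
    unfolding l2_inner_def by simp
  then show "u x = 0" by simp
qed

section \<open>The random-walk generator\<close>

lemma
  assumes "is_rw_kernel a"
  shows rw_kernel_summable: "a summable_on UNIV"
    and rw_kernel_infsum: "infsum a UNIV = 0"
    and rw_kernel_even: "a (- z) = a z"
    and rw_kernel_nonneg: "z \<noteq> 0 \<Longrightarrow> 0 \<le> a z"
  using assms unfolding is_rw_kernel_def by (auto simp: summable_on_def infsumI)

lemma rw_kernel_abs_summable: "is_rw_kernel a \<Longrightarrow> (\<lambda>z. \<bar>a z\<bar>) summable_on UNIV"
  using rw_kernel_summable summable_on_iff_abs_summable_on_real by fastforce

lemma opA_summable:
  assumes "is_rw_kernel a" and "l2 u"
  shows "(\<lambda>x'. a (x - x') * u x') summable_on UNIV"
proof (rule summable_on_dominated_real)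
  let ?M = "1 + (\<Sum>\<^sub>\<infinity>x. (u x)\<^sup>2)"
  have "(\<lambda>z. \<bar>a z\<bar> * ?M) summable_on UNIV"
    using rw_kernel_abs_summable[OF assms(1)] by (rule summable_on_cmult_left)
  then show "(\<lambda>x'. \<bar>a (x - x')\<bar> * ?M) summable_on UNIV"
    using summable_on_reindex_bij_betw[of "\<lambda>x'. x - x'" UNIV UNIV "\<lambda>z. \<bar>a z\<bar> * ?M"]
    by (simp add: bij_betw_def inj_on_def surj_def)
  show "\<bar>a (x - x') * u x'\<bar> \<le> \<bar>a (x - x')\<bar> * ?M" for x'
    using l2_abs_le[OF assms(2), of x'] by (simp add: abs_mult mult_left_mono)
qed

lemma opA_lincomb:
  assumes "is_rw_kernel a" and "l2 u" and "l2 v"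
  shows "opA a (\<lambda>y. p * u y + q * v y) x = p * opA a u x + q * opA a v x"
  using infsum_lincomb[OF opA_summable[OF assms(1,2)] opA_summable[OF assms(1,3)]]
  unfolding opA_def by (simp add: algebra_simps)

definition correlation :: "('a::ab_group_add \<Rightarrow> real) \<Rightarrow> ('a \<Rightarrow> real) \<Rightarrow> 'a \<Rightarrow> real" where
  "correlation u v z = (\<Sum>\<^sub>\<infinity>x. u (x - z) * v x)"

lemma correlation_swap: "correlation u v z = correlation v u (- z)"
  unfolding correlation_def
  using infsum_reindex_bij_betw[of "\<lambda>x. x - z" UNIV UNIV "\<lambda>y. v (y + z) * u y"]
  by (simp add: bij_betw_def inj_on_def surj_def mult.commute)

lemma
  assumes "l2 u" and "l2 v"
  shows correlation_abs_summable: "(\<lambda>x. \<bar>u (x - z) * v x\<bar>) summable_on UNIV"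
    and correlation_abs_le:
      "(\<Sum>\<^sub>\<infinity>x. \<bar>u (x - z) * v x\<bar>) \<le> (l2_inner u u + l2_inner v v) / 2"
proof -
  have squares: "(\<lambda>x. (u (x - z))\<^sup>2) summable_on UNIV" "(\<lambda>x. (v x)\<^sup>2) summable_on UNIV"
    using l2_translate[OF assms(1)] assms(2) unfolding l2_def by auto
  show summable: "(\<lambda>x. \<bar>u (x - z) * v x\<bar>) summable_on UNIV"
    using l2_mult_summable[OF l2_translate[OF assms(1)] assms(2)]
      summable_on_iff_abs_summable_on_real by fastforce
  have "(\<Sum>\<^sub>\<infinity>x. \<bar>u (x - z) * v x\<bar>) \<le> (\<Sum>\<^sub>\<infinity>x. 1/2 * (u (x - z))\<^sup>2 + 1/2 * (v x)\<^sup>2)"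
    using abs_mult_le_half_squares
    by (intro infsum_mono[OF summable summable_on_lincomb[OF squares]]) simp
  also have "\<dots> = 1/2 * (\<Sum>\<^sub>\<infinity>x. (u (x - z))\<^sup>2) + 1/2 * (\<Sum>\<^sub>\<infinity>x. (v x)\<^sup>2)"
    by (rule infsum_lincomb[OF squares])
  also have "\<dots> = (l2_inner u u + l2_inner v v) / 2"
    using infsum_reindex_bij_betw[of "\<lambda>x. x - z" UNIV UNIV "\<lambda>x. (u x)\<^sup>2"]
    by (simp add: infsum_square_eq_l2_inner bij_betw_def inj_on_def surj_def)
  finally show "(\<Sum>\<^sub>\<infinity>x. \<bar>u (x - z) * v x\<bar>) \<le> (l2_inner u u + l2_inner v v) / 2" .
qed

lemma abs_correlation_le:
  assumes "l2 u" and "l2 v"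
  shows "\<bar>correlation u v z\<bar> \<le> (l2_inner u u + l2_inner v v) / 2"
  using norm_infsum_bound[of "\<lambda>x. u (x - z) * v x" UNIV] correlation_abs_le[OF assms, of z]
    correlation_abs_summable[OF assms, of z]
  unfolding correlation_def by simp

lemma kernel_correlation_summable_on_product:
  assumes "is_rw_kernel a" and "l2 u" and "l2 v"
  shows "(\<lambda>(z, x). a z * (u (x - z) * v x)) summable_on UNIV \<times> UNIV"
proof -
  let ?F = "\<lambda>(z, x). a z * (u (x - z) * v x)"
  have "(\<lambda>p. norm (?F p)) summable_on Sigma UNIV (\<lambda>_. UNIV)"
  proof (subst Infinite_Sum.abs_summable_on_Sigma_iff, intro conjI ballI)
    show "(\<lambda>x. norm (?F (z, x))) summable_on UNIV" for z
      using correlation_abs_summable[OF assms(2,3), of z]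
      by (simp add: abs_mult summable_on_cmult_right)
    have "(\<lambda>z. \<bar>a z\<bar> * ((l2_inner u u + l2_inner v v) / 2)) summable_on UNIV"
      using rw_kernel_abs_summable[OF assms(1)] by (rule summable_on_cmult_left)
    then show "(\<lambda>z. norm (\<Sum>\<^sub>\<infinity>x. norm (?F (z, x)))) summable_on UNIV"
    proof (rule summable_on_dominated_real)
      fix z
      have "(\<Sum>\<^sub>\<infinity>x. norm (?F (z, x))) = \<bar>a z\<bar> * (\<Sum>\<^sub>\<infinity>x. \<bar>u (x - z) * v x\<bar>)"
        by (simp add: abs_mult infsum_cmult_right')
      moreover have "0 \<le> (\<Sum>\<^sub>\<infinity>x. \<bar>u (x - z) * v x\<bar>)"
        by (simp add: infsum_nonneg)
      ultimately show "\<bar>norm (\<Sum>\<^sub>\<infinity>x. norm (?F (z, x)))\<bar> \<le> \<bar>a z\<bar> * ((l2_inner u u + l2_inner v v) / 2)"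
        using mult_left_mono[OF correlation_abs_le[OF assms(2,3), of z], of "\<bar>a z\<bar>"] by simp
    qed
  qed
  then show ?thesis
    using summable_on_iff_abs_summable_on_real by auto
qed

lemma l2_inner_opA:
  assumes "is_rw_kernel a" and "l2 u" and "l2 v"
  shows "l2_inner (opA a u) v = (\<Sum>\<^sub>\<infinity>z. a z * correlation u v z)"
proof -
  have "(\<Sum>\<^sub>\<infinity>z. a z * correlation u v z) = (\<Sum>\<^sub>\<infinity>z. \<Sum>\<^sub>\<infinity>x. a z * (u (x - z) * v x))"
    unfolding correlation_def by (simp add: infsum_cmult_right')
  also have "\<dots> = (\<Sum>\<^sub>\<infinity>x. \<Sum>\<^sub>\<infinity>z. a z * (u (x - z) * v x))"
    by (rule infsum_swap_banach[OF kernel_correlation_summable_on_product[OF assms]])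
  also have "\<dots> = (\<Sum>\<^sub>\<infinity>x. (\<Sum>\<^sub>\<infinity>z. a z * u (x - z)) * v x)"
    by (simp add: infsum_cmult_left'[symmetric] mult.assoc)
  also have "\<dots> = l2_inner (opA a u) v"
    unfolding l2_inner_def opA_def
    using infsum_reindex_bij_betw[of "\<lambda>x'. x - x'" UNIV UNIV "\<lambda>z. a z * u (x - z)" for x]
    by (simp add: bij_betw_def inj_on_def surj_def)
  finally show ?thesis ..
qed

lemma l2_inner_opA_commute:
  assumes "is_rw_kernel a" and "l2 u" and "l2 v"
  shows "l2_inner (opA a u) v = l2_inner (opA a v) u"
proof -
  have "l2_inner (opA a u) v = (\<Sum>\<^sub>\<infinity>z. a (- z) * correlation v u (- z))"
    by (simp add: l2_inner_opA[OF assms] rw_kernel_even[OF assms(1)] correlation_swap[of u v])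
  also have "\<dots> = (\<Sum>\<^sub>\<infinity>z. a z * correlation v u z)"
    using infsum_reindex_bij_betw[of uminus UNIV UNIV "\<lambda>z. a z * correlation v u z"]
    by (simp add: bij_betw_def inj_on_def surj_def)
  also have "\<dots> = l2_inner (opA a v) u"
    by (simp add: l2_inner_opA[OF assms(1,3,2)])
  finally show ?thesis .
qed

text \<open>The autocorrelation is maximal at \<open>0\<close>, where \<open>a\<close> takes its only negative value.\<close>
lemma l2_inner_opA_self_nonpos:
  assumes "is_rw_kernel a" and "l2 u"
  shows "l2_inner (opA a u) u \<le> 0"
proof -
  have correlation_le: "correlation u u z \<le> correlation u u 0" for z
    using abs_correlation_le[OF assms(2,2), of z]
    by (simp add: correlation_def l2_inner_def)
  have "(\<lambda>z. \<bar>a z\<bar> * l2_inner u u) summable_on UNIV"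
    using rw_kernel_abs_summable[OF assms(1)] by (rule summable_on_cmult_left)
  then have summable: "(\<lambda>z. a z * correlation u u z) summable_on UNIV"
    by (rule summable_on_dominated_real)
      (use abs_correlation_le[OF assms(2,2)] in \<open>simp add: abs_mult mult_left_mono\<close>)
  have "l2_inner (opA a u) u \<le> (\<Sum>\<^sub>\<infinity>z. a z * correlation u u 0)"
    unfolding l2_inner_opA[OF assms(1,2,2)]
  proof (rule infsum_mono[OF summable])
    show "(\<lambda>z. a z * correlation u u 0) summable_on UNIV"
      using rw_kernel_summable[OF assms(1)] by (rule summable_on_cmult_left)
    show "a z * correlation u u z \<le> a z * correlation u u 0" for z
      using rw_kernel_nonneg[OF assms(1), of z] correlation_le[of z]
      by (cases "z = 0") (auto intro: mult_left_mono)
  qed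
  also have "\<dots> = 0"
    by (simp add: infsum_cmult_left' rw_kernel_infsum[OF assms(1)])
  finally show ?thesis .
qed

section \<open>Eigenspaces of the perturbed operator\<close>

definition point_potential :: "nat \<Rightarrow> (nat \<Rightarrow> 'a) \<Rightarrow> ('a \<Rightarrow> real) \<Rightarrow> 'a \<Rightarrow> real" where
  "point_potential N xs u x = (\<Sum>i<N. if x = xs i then u (xs i) else 0)"

lemma has_sum_point_potential:
  "((\<lambda>x. point_potential N xs u x * w x) has_sum (\<Sum>i<N. u (xs i) * w (xs i))) UNIV"
proof -
  let ?T = "xs ` {..<N}"
  have "(\<Sum>x\<in>?T. point_potential N xs u x * w x)
      = (\<Sum>i<N. \<Sum>x\<in>?T. if x = xs i then u (xs i) * w (xs i) else 0)"
    unfolding point_potential_def sum_distrib_right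
    by (subst sum.swap) (auto intro!: sum.cong)
  also have "\<dots> = (\<Sum>i<N. u (xs i) * w (xs i))"
    by (simp add: sum.delta)
  finally have "((\<lambda>x. point_potential N xs u x * w x) has_sum (\<Sum>i<N. u (xs i) * w (xs i))) ?T"
    by (simp add: has_sum_finiteI)
  then show ?thesis
    by (rule has_sum_cong_neutral[THEN iffD1, rotated -1]) (auto simp: point_potential_def intro!: sum.neutral)
qed

lemma eigenspace_H_iff:
  "u \<in> eigenspace_H a \<beta> N xs lam \<longleftrightarrow>
     l2 u \<and> (\<forall>x. opA a u x = lam * u x - \<beta> * point_potential N xs u x)"
  unfolding eigenspace_H_def opH_def point_potential_def
  by (auto simp: fun_eq_iff algebra_simps)

lemma l2_inner_opA_eigenfunction:
  assumes "u \<in> eigenspace_H a \<beta> N xs lam" and "l2 w"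
  shows "l2_inner (opA a u) w = lam * l2_inner u w - \<beta> * (\<Sum>i<N. u (xs i) * w (xs i))"
proof -
  have "l2 u" and opA_u: "opA a u x = lam * u x - \<beta> * point_potential N xs u x" for x
    using assms(1) by (auto simp: eigenspace_H_iff)
  have "l2_inner (opA a u) w = (\<Sum>\<^sub>\<infinity>x. lam * (u x * w x) + (- \<beta>) * (point_potential N xs u x * w x))"
    unfolding l2_inner_def opA_u by (simp add: algebra_simps)
  also have "\<dots> = lam * l2_inner u w + (- \<beta>) * (\<Sum>i<N. u (xs i) * w (xs i))"
    using has_sum_point_potential[of N xs u w] l2_mult_summable[OF \<open>l2 u\<close> assms(2)]
    by (subst infsum_lincomb) (auto simp: summable_on_def infsumI l2_inner_def)
  finally show ?thesis by simp
qed

lemma eigenspaces_H_orthogonal: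
  assumes ker: "is_rw_kernel a" and "lam \<noteq> mu"
    and u: "u \<in> eigenspace_H a \<beta> N xs lam" and v: "v \<in> eigenspace_H a \<beta> N xs mu"
  shows "l2_inner u v = 0"
proof -
  have "l2 u" "l2 v"
    using u v by (simp_all add: eigenspace_H_iff)
  have "(\<Sum>i<N. v (xs i) * u (xs i)) = (\<Sum>i<N. u (xs i) * v (xs i))"
    by (simp add: mult.commute)
  then have "lam * l2_inner u v = mu * l2_inner u v"
    using l2_inner_opA_commute[OF ker \<open>l2 u\<close> \<open>l2 v\<close>]
    by (simp add: l2_inner_opA_eigenfunction[OF u \<open>l2 v\<close>]
        l2_inner_opA_eigenfunction[OF v \<open>l2 u\<close>] l2_inner_commute[of v u])
  then show ?thesis
    using \<open>lam \<noteq> mu\<close> by simp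
qed

theorem eigenfunctions_agreeing_at_points_vanish:
  assumes ker: "is_rw_kernel a" and "0 < lam" "0 < mu" "lam \<noteq> mu"
    and u: "u \<in> eigenspace_H a \<beta> N xs lam" and v: "v \<in> eigenspace_H a \<beta> N xs mu"
    and agree: "\<And>i. i < N \<Longrightarrow> u (xs i) = v (xs i)"
  shows "u = (\<lambda>x. 0) \<and> v = (\<lambda>x. 0)"
proof -
  have "l2 u" "l2 v"
    using u v by (simp_all add: eigenspace_H_iff)
  have orthogonal: "l2_inner u v = 0"
    using eigenspaces_H_orthogonal[OF ker \<open>lam \<noteq> mu\<close> u v] .
  define w where "w x = 1 * u x + (- 1) * v x" for x
  have "l2 w"
    unfolding w_def using \<open>l2 u\<close> \<open>l2 v\<close> by (rule l2_lincomb)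
  have "point_potential N xs u = point_potential N xs v"
    by (auto simp: point_potential_def agree intro!: ext sum.cong)
  then have opA_w: "opA a w = (\<lambda>x. lam * u x + (- mu) * v x)"
    using u v unfolding w_def eigenspace_H_iff opA_lincomb[OF ker \<open>l2 u\<close> \<open>l2 v\<close>]
    by auto
  have "l2_inner w u = 1 * l2_inner u u + (- 1) * l2_inner v u"
    "l2_inner w v = 1 * l2_inner u v + (- 1) * l2_inner v v"
    unfolding w_def using \<open>l2 u\<close> \<open>l2 v\<close> by (simp_all only: l2_inner_lincomb_left)
  then have inner_w: "l2_inner u w = l2_inner u u" "l2_inner v w = - l2_inner v v"
    using orthogonal l2_inner_commute[of u w] l2_inner_commute[of v w] l2_inner_commute[of v u]
    by simp_all
  have "l2_inner (opA a w) w = l2_inner (\<lambda>x. lam * u x + (- mu) * v x) w"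
    by (simp only: opA_w)
  also have "\<dots> = lam * l2_inner u u + mu * l2_inner v v"
    unfolding l2_inner_lincomb_left[OF \<open>l2 u\<close> \<open>l2 v\<close> \<open>l2 w\<close>] inner_w by simp
  finally have "lam * l2_inner u u + mu * l2_inner v v \<le> 0"
    using l2_inner_opA_self_nonpos[OF ker \<open>l2 w\<close>] by simp
  moreover have "0 \<le> lam * l2_inner u u" "0 \<le> mu * l2_inner v v"
    using \<open>0 < lam\<close> \<open>0 < mu\<close> by (simp_all add: l2_inner_self_nonneg)
  ultimately have "lam * l2_inner u u \<le> 0" "mu * l2_inner v v \<le> 0"
    by linarith+
  then have "l2_inner u u \<le> 0" "l2_inner v v \<le> 0"
    using \<open>0 < lam\<close> \<open>0 < mu\<close> by (simp_all add: mult_le_0_iff)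
  then show ?thesis
    using l2_inner_self_le_0D \<open>l2 u\<close> \<open>l2 v\<close> by blast
qed

lemma zero_in_eigenspace_H: "(\<lambda>x. 0) \<in> eigenspace_H a \<beta> N xs lam"
  unfolding eigenspace_H_def l2_def opH_def opA_def by simp

lemma eigenspace_H_lincomb:
  assumes ker: "is_rw_kernel a"
    and u: "u \<in> eigenspace_H a \<beta> N xs lam" and w: "w \<in> eigenspace_H a \<beta> N xs lam"
  shows "(\<lambda>x. p * u x + q * w x) \<in> eigenspace_H a \<beta> N xs lam"
proof -
  have "l2 u" "l2 w"
    and opA_u: "opA a u x = lam * u x - \<beta> * point_potential N xs u x"
    and opA_w: "opA a w x = lam * w x - \<beta> * point_potential N xs w x" for x
    using u w by (simp_all add: eigenspace_H_iff)
  have potential: "point_potential N xs (\<lambda>x. p * u x + q * w x) y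
      = p * point_potential N xs u y + q * point_potential N xs w y" for y
    unfolding point_potential_def sum_distrib_left sum.distrib[symmetric]
    by (rule sum.cong) auto
  show ?thesis
    unfolding eigenspace_H_iff using \<open>l2 u\<close> \<open>l2 w\<close>
    by (simp add: opA_lincomb[OF ker \<open>l2 u\<close> \<open>l2 w\<close>] opA_u opA_w potential l2_lincomb
        algebra_simps)
qed

lemma eigenspace_H_sum:
  assumes ker: "is_rw_kernel a" and "finite T" and "T \<subseteq> eigenspace_H a \<beta> N xs lam"
  shows "(\<lambda>x. \<Sum>s\<in>T. c s * s x) \<in> eigenspace_H a \<beta> N xs lam"
  using assms(2,3)
proof (induction T rule: finite_induct)
  case empty
  then show ?case by (simp add: zero_in_eigenspace_H)
next
  case (insert t T)
  then have "(\<lambda>x. c t * t x + 1 * (\<Sum>s\<in>T. c s * s x)) \<in> eigenspace_H a \<beta> N xs lam"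
    by (intro eigenspace_H_lincomb[OF ker]) auto
  then show ?case
    using insert.hyps by simp
qed

corollary eigenfunction_vanishing_at_points:
  assumes "is_rw_kernel a" and "0 < lam" and "u \<in> eigenspace_H a \<beta> N xs lam"
    and "\<And>i. i < N \<Longrightarrow> u (xs i) = 0"
  shows "u = (\<lambda>x. 0)"
  using eigenfunctions_agreeing_at_points_vanish[of a lam "lam + 1", OF _ _ _ _ _ zero_in_eigenspace_H]
    assms by auto

section \<open>Counting dimensions\<close>

lemma exists_nontrivial_combination_vanishing:
  fixes f :: "'a \<Rightarrow> nat \<Rightarrow> real"
  assumes "finite J" and "N < card J"
  shows "\<exists>c. (\<exists>j\<in>J. c j \<noteq> 0) \<and> (\<forall>i<N. (\<Sum>j\<in>J. c j * f j i) = 0)"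
  using assms
proof (induction N arbitrary: J f)
  case 0
  then obtain j0 where "j0 \<in> J"
    by fastforce
  then show ?case
    by (intro exI[of _ "\<lambda>j. if j = j0 then 1 else 0"]) auto
next
  case (Suc n)
  txt \<open>Eliminate coordinate \<open>n\<close> against a pivot \<open>j0\<close> with \<open>f j0 n \<noteq> 0\<close> if there is one;
    otherwise coordinate \<open>n\<close> vanishes already, and division by \<open>0\<close> makes \<open>f' = f\<close>.\<close>
  obtain j0 where "j0 \<in> J" and pivot: "f j0 n = 0 \<Longrightarrow> \<forall>j\<in>J. f j n = 0"
    using Suc.prems by (metis card.empty ex_in_conv not_less_zero)
  define J' where "J' = J - {j0}"
  define f' where "f' j i = f j i - f j n / f j0 n * f j0 i" for j i
  have J: "J = insert j0 J'" "j0 \<notin> J'" "finite J'" "n < card J'"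
    using Suc.prems \<open>j0 \<in> J\<close> by (auto simp: J'_def)
  obtain d where d: "\<exists>j\<in>J'. d j \<noteq> 0" "\<forall>i<n. (\<Sum>j\<in>J'. d j * f' j i) = 0"
    using Suc.IH[of J' f'] J by blast
  define c where "c j = (if j = j0 then - (\<Sum>j\<in>J'. d j * f j n) / f j0 n else d j)" for j
  have combination: "(\<Sum>j\<in>J. c j * f j i) = (\<Sum>j\<in>J'. d j * f' j i)" for i
  proof -
    have "(\<Sum>j\<in>J'. c j * f j i) = (\<Sum>j\<in>J'. d j * f j i)"
      unfolding c_def using J by (intro sum.cong) auto
    then show ?thesis
      using J unfolding f'_def c_def
      by (simp add: algebra_simps sum_subtractf sum_distrib_left sum_distrib_right sum_divide_distrib)
  qed
  have "f' j n = 0" if "j \<in> J'" for j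
    using pivot that J by (cases "f j0 n = 0") (auto simp: f'_def)
  then have "\<forall>i<Suc n. (\<Sum>j\<in>J. c j * f j i) = 0"
    using d(2) by (auto simp: combination less_Suc_eq)
  moreover have "\<exists>j\<in>J. c j \<noteq> 0"
    using d(1) J unfolding c_def by force
  ultimately show ?case
    by blast
qed

lemma lin_indep_card_less_points:
  fixes S :: "('b \<Rightarrow> real) set" and p :: "nat \<Rightarrow> 'b"
  assumes "finite S" and "lin_indep S"
    and determined: "\<And>c. \<forall>i<N. (\<Sum>s\<in>S. c s * s (p i)) = 0 \<Longrightarrow> \<forall>x. (\<Sum>s\<in>S. c s * s x) = 0"
    and missed: "\<And>c. \<exists>i<N. (\<Sum>s\<in>S. c s * s (p i)) \<noteq> g i"
  shows "card S < N"
proof (rule ccontr)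
  assume "\<not> card S < N"
  define J where "J = insert None (Some ` S)"
  have "finite J" and "N < card J"
    using \<open>finite S\<close> \<open>\<not> card S < N\<close> by (simp_all add: J_def card_image)
  then obtain c where nontrivial: "\<exists>j\<in>J. c j \<noteq> 0"
    and vanishing: "\<forall>i<N. (\<Sum>j\<in>J. c j * (case j of None \<Rightarrow> g i | Some s \<Rightarrow> s (p i))) = 0"
    using exists_nontrivial_combination_vanishing
      [of J N "\<lambda>j i. case j of None \<Rightarrow> g i | Some s \<Rightarrow> s (p i)"]
    by blast
  have split: "(\<Sum>j\<in>J. c j * (case j of None \<Rightarrow> g i | Some s \<Rightarrow> s (p i)))
      = c None * g i + (\<Sum>s\<in>S. c (Some s) * s (p i))" for i
    unfolding J_def using \<open>finite S\<close> by (simp add: sum.reindex)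
  show False
  proof (cases "c None = 0")
    case True
    then have "\<forall>x. (\<Sum>s\<in>S. c (Some s) * s x) = 0"
      using determined vanishing split by simp
    then have "\<forall>s\<in>S. c (Some s) = 0"
      using \<open>lin_indep S\<close> unfolding lin_indep_def by (elim allE[of _ "\<lambda>s. c (Some s)"]) blast
    then show False
      using nontrivial True unfolding J_def by auto
  next
    case False
    have "(\<Sum>s\<in>S. - c (Some s) / c None * s (p i)) = g i" if "i < N" for i
    proof -
      have "(\<Sum>s\<in>S. c (Some s) * s (p i)) = - (c None * g i)"
        using vanishing split[of i] that by simp
      then have "(\<Sum>s\<in>S. c (Some s) * s (p i)) / c None = - g i"
        using False by simp
      then show ?thesis
        by (simp add: sum_divide_distrib[symmetric] sum_negf)
    qed
    then show False
      using missed[of "\<lambda>s. - c (Some s) / c None"] by blast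
  qed
qed

theorem corollary1:
  fixes a :: "int ^ 'd \<Rightarrow> real" and N :: nat and xs :: "nat \<Rightarrow> int ^ 'd"
    and \<beta> :: real and lam :: real
  assumes "N \<ge> 2"
    and "is_rw_kernel a"
    and "cond_F a \<or> cond_HT a"
    and "inj_on xs {..<N}"
    and "\<beta> > beta_c a N xs"
    and "lam > 0" and "is_eigenvalue_H a \<beta> N xs lam"
    and "\<exists>\<mu>. \<mu> > lam \<and> is_eigenvalue_H a \<beta> N xs \<mu>"
  shows "mult_le a \<beta> N xs lam (N - 1)"
  unfolding mult_le_def
proof (intro allI impI)
  fix S
  assume S: "finite S \<and> S \<subseteq> eigenspace_H a \<beta> N xs lam \<and> lin_indep S"
  obtain \<mu> v where "\<mu> > lam" and v: "v \<in> eigenspace_H a \<beta> N xs \<mu>" "v \<noteq> (\<lambda>x. 0)"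
    using assms(8) unfolding is_eigenvalue_H_def by blast
  have combination: "(\<lambda>x. \<Sum>s\<in>S. c s * s x) \<in> eigenspace_H a \<beta> N xs lam" for c
    using eigenspace_H_sum[OF assms(2)] S by blast
  have "0 < \<mu>" "lam \<noteq> \<mu>"
    using \<open>\<mu> > lam\<close> assms(6) by simp_all
  have "card S < N"
  proof (rule lin_indep_card_less_points[where p = xs and g = "\<lambda>i. v (xs i)"])
    fix c
    show "\<forall>x. (\<Sum>s\<in>S. c s * s x) = 0" if "\<forall>i<N. (\<Sum>s\<in>S. c s * s (xs i)) = 0"
      using eigenfunction_vanishing_at_points[OF assms(2,6) combination, of c] that
      by (simp add: fun_eq_iff)
    show "\<exists>i<N. (\<Sum>s\<in>S. c s * s (xs i)) \<noteq> v (xs i)"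
      using eigenfunctions_agreeing_at_points_vanish
        [OF assms(2,6) \<open>0 < \<mu>\<close> \<open>lam \<noteq> \<mu>\<close> combination[of c] v(1)] v(2)
      by blast
  qed (use S in auto)
  then show "card S \<le> N - 1"
    by linarith
qed

end
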